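(* Let $X\in\mathbb{R}^{n\times D}$ (possibly already augmented with a column of ones for the bias) with $X^\top X$ invertible, and $y\in\mathbb{R}^n$. Let $\mathcal{Q}$ be a partition of $\{1,\dots,D\}$ and $\mathcal{P}$ a partition of $\{1,\dots,n\}$ such that $(\mathcal{P},\mathcal{Q})$ is equitable on $X$ and $(X^\top y)_{j_1}=(X^\top y)_{j_2}$ whenever $j_1,j_2$ share a color of $\mathcal{Q}$. Set $X'=\Pi_{\mathcal{P}}^{\mathrm{Scaled}}X\Pi_{\mathcal{Q}}$, $y'=\Pi_{\mathcal{P}}^{\mathrm{Scaled}}y$, $W'=\Pi_{\mathcal{P}}^\top\Pi_{\mathcal{P}}$ (the diagonal matrix with $W'_{SS}=|S|$), and assume $(X')^\top W'X'$ is invertible. Let $w'=((X')^\top W'X')^{-1}(X')^\top W'y'$. Then $\Pi_{\mathcal{Q}}w'=(X^\top X)^{-1}X^\top y$.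
   Context: A partition of a finite set is a set of nonempty pairwise disjoint subsets ("colors") covering it. A pair $(\mathcal{P},\mathcal{Q})$ of partitions of the row and column indices of $A$ is equitable on $A$ if for every $S\in\mathcal{P}$, $T\in\mathcal{Q}$: $\sum_{j\in T}A_{ij}$ is the same for all $i\in S$ and $\sum_{i\in S}A_{ij}$ is the same for all $j\in T$. For a partition $\mathcal{Q}$ of $\{1,\dots,D\}$, $\Pi_{\mathcal{Q}}\in\{0,1\}^{D\times|\mathcal{Q}|}$ has $(\Pi_{\mathcal{Q}})_{jT}=1$ iff $j\in T$; $\Pi^{\mathrm{Scaled}}_{\mathcal{Q}}\in\mathbb{R}^{|\mathcal{Q}|\times D}$ has entries $1/|T|$ if $j\in T$ and $0$ otherwise (row-normalized $\Pi_{\mathcal{Q}}^\top$); similarly for $\mathcal{P}$. *)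

theory Defs
  imports Complex_Main
begin

text \<open>Matrices are represented as functions from index pairs to reals; the row and
column index sets are given explicitly (finite types, or sets of colors).\<close>

definition is_partition :: "'a set set \<Rightarrow> 'a set \<Rightarrow> bool" where
  "is_partition P I \<longleftrightarrow> {} \<notin> P \<and> \<Union>P = I \<and>
     (\<forall>S\<in>P. \<forall>S'\<in>P. S \<noteq> S' \<longrightarrow> S \<inter> S' = {})"

definition equitable ::
  "'r set set \<Rightarrow> 'c set set \<Rightarrow> ('r \<Rightarrow> 'c \<Rightarrow> real) \<Rightarrow> bool" where
  "equitable P Q A \<longleftrightarrow> (\<forall>S\<in>P. \<forall>T\<in>Q.
      (\<forall>i\<in>S. \<forall>i'\<in>S. (\<Sum>j\<in>T. A i j) = (\<Sum>j\<in>T. A i' j)) \<and>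
      (\<forall>j\<in>T. \<forall>j'\<in>T. (\<Sum>i\<in>S. A i j) = (\<Sum>i\<in>S. A i j')))"

text \<open>Indicator matrix Pi_Q (rows: elements, columns: colors) and the scaled
matrix Pi_Q^Scaled (rows: colors, columns: elements).\<close>

definition Pi_mat :: "'a set set \<Rightarrow> 'a \<Rightarrow> 'a set \<Rightarrow> real" where
  "Pi_mat Q j T = (if j \<in> T then 1 else 0)"

definition Pi_scaled :: "'a set set \<Rightarrow> 'a set \<Rightarrow> 'a \<Rightarrow> real" where
  "Pi_scaled Q T j = (if j \<in> T then 1 / real (card T) else 0)"

definition is_inverse_on :: "'a set \<Rightarrow> ('a \<Rightarrow> 'a \<Rightarrow> real) \<Rightarrow> ('a \<Rightarrow> 'a \<Rightarrow> real) \<Rightarrow> bool" where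
  "is_inverse_on I A M \<longleftrightarrow>
     (\<forall>i\<in>I. \<forall>k\<in>I. (\<Sum>j\<in>I. M i j * A j k) = (if i = k then 1 else 0)) \<and>
     (\<forall>i\<in>I. \<forall>k\<in>I. (\<Sum>j\<in>I. A i j * M j k) = (if i = k then 1 else 0))"

definition invertible_on :: "'a set \<Rightarrow> ('a \<Rightarrow> 'a \<Rightarrow> real) \<Rightarrow> bool" where
  "invertible_on I A \<longleftrightarrow> (\<exists>M. is_inverse_on I A M)"

definition inv_on :: "'a set \<Rightarrow> ('a \<Rightarrow> 'a \<Rightarrow> real) \<Rightarrow> ('a \<Rightarrow> 'a \<Rightarrow> real)" where
  "inv_on I A = (SOME M. is_inverse_on I A M)"

end

theory Submission
  imports Defs
begin

text \<open>Lift the reduced solution to w = Pi_Q w'. Row-equitability makes X w constant on each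
class S of P, with value (X' w')_S; column-equitability then gives, for k in a class T of Q,
(X^T X w)_k = ((X')^T W' X' w')_T / |T| = ((X')^T W' y')_T / |T|, and the right-hand side
equals (X^T y)_k because X^T y is constant on T. So w solves the normal equations
X^T X w = X^T y, whose unique solution is (X^T X)^-1 X^T y.\<close>

lemma is_partition_finite:
  assumes "is_partition P I" "finite I"
  shows "finite P"
proof (rule finite_subset)
  show "P \<subseteq> Pow I" using assms(1) unfolding is_partition_def by blast
qed (use assms(2) in simp)

lemma is_partition_class_eq:
  assumes "is_partition P I" "S \<in> P" "S' \<in> P" "i \<in> S" "i \<in> S'"
  shows "S = S'"
  using assms unfolding is_partition_def by blast

lemma is_partition_obtain_class:
  assumes "is_partition P I" "i \<in> I"
  obtains S where "S \<in> P" "i \<in> S"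
  using assms unfolding is_partition_def by blast

lemma sum_partition:
  assumes "is_partition P I" "finite I"
  shows "sum f I = (\<Sum>S\<in>P. sum f S)"
proof -
  have "\<forall>S\<in>P. finite S"
    using assms unfolding is_partition_def by (metis Union_upper finite_subset)
  moreover have "\<forall>S\<in>P. \<forall>S'\<in>P. S \<noteq> S' \<longrightarrow> S \<inter> S' = {}"
    using assms(1) unfolding is_partition_def by blast
  moreover have "\<Union>P = I" using assms(1) unfolding is_partition_def by blast
  ultimately show ?thesis using sum.Union_disjoint[of P f] by simp
qed

definition Pi_mult :: "'a set set \<Rightarrow> ('a set \<Rightarrow> real) \<Rightarrow> 'a \<Rightarrow> real" where
  "Pi_mult Q w j = (\<Sum>T\<in>Q. Pi_mat Q j T * w T)"

lemma Pi_mult_class: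
  assumes "is_partition Q I" "finite I" "T \<in> Q" "j \<in> T"
  shows "Pi_mult Q w j = w T"
proof -
  have "j \<in> T' \<longleftrightarrow> T' = T" if "T' \<in> Q" for T'
    using is_partition_class_eq[OF assms(1) that assms(3) _ assms(4)] assms(4) by blast
  then have "Pi_mult Q w j = (\<Sum>T'\<in>Q. if T' = T then w T' else 0)"
    unfolding Pi_mult_def Pi_mat_def by (intro sum.cong) auto
  also have "\<dots> = w T" using assms(3) is_partition_finite[OF assms(1,2)] by simp
  finally show ?thesis .
qed

lemma sum_Pi_scaled_mult:
  "(\<Sum>i\<in>(UNIV::'a::finite set). Pi_scaled P S i * f i) = sum f S / card S"
proof -
  have "(\<Sum>i\<in>UNIV. Pi_scaled P S i * f i) = (\<Sum>i\<in>UNIV. if i \<in> S then f i / card S else 0)"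
    unfolding Pi_scaled_def by (intro sum.cong) auto
  then show ?thesis by (simp add: sum.inter_restrict[symmetric] sum_divide_distrib)
qed

lemma sum_mult_Pi_mat: "(\<Sum>j\<in>(UNIV::'a::finite set). f j * Pi_mat Q j T) = sum f T"
proof -
  have "(\<Sum>j\<in>UNIV. f j * Pi_mat Q j T) = (\<Sum>j\<in>UNIV. if j \<in> T then f j else 0)"
    unfolding Pi_mat_def by (intro sum.cong) auto
  then show ?thesis by (simp add: sum.inter_restrict[symmetric])
qed

lemma sum_Pi_mat_mult_Pi_mat:
  assumes "is_partition P (UNIV::'a::finite set)" "S \<in> P" "S' \<in> P"
  shows "(\<Sum>i\<in>UNIV. Pi_mat P i S * Pi_mat P i S') = (if S = S' then card S else 0)"
proof -
  have disjoint: "S \<noteq> S' \<Longrightarrow> S \<inter> S' = {}" using assms unfolding is_partition_def by blast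
  have "(\<Sum>i\<in>UNIV. Pi_mat P i S * Pi_mat P i S') = (\<Sum>i\<in>UNIV. if i \<in> S \<inter> S' then 1 else 0)"
    unfolding Pi_mat_def by (intro sum.cong) auto
  also have "\<dots> = card (S \<inter> S')"
    using sum.inter_restrict[of UNIV "\<lambda>_. 1::real" "S \<inter> S'"] by simp
  finally show ?thesis using disjoint by auto
qed

lemma is_inverse_on_inv_on:
  assumes "invertible_on I A"
  shows "is_inverse_on I A (inv_on I A)"
  using assms unfolding invertible_on_def inv_on_def by (rule someI_ex)

lemma sum_mult_sum_assoc:
  assumes "finite J" "finite K"
  shows "(\<Sum>j\<in>J. a j * (\<Sum>k\<in>K. B j k * x k)) = (\<Sum>k\<in>K. (\<Sum>j\<in>J. a j * B j k) * (x k :: real))"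
proof -
  have "(\<Sum>j\<in>J. a j * (\<Sum>k\<in>K. B j k * x k)) = (\<Sum>j\<in>J. \<Sum>k\<in>K. a j * B j k * x k)"
    by (simp add: sum_distrib_left mult.assoc)
  also have "\<dots> = (\<Sum>k\<in>K. \<Sum>j\<in>J. a j * B j k * x k)" by (rule sum.swap)
  also have "\<dots> = (\<Sum>k\<in>K. (\<Sum>j\<in>J. a j * B j k) * x k)" by (simp add: sum_distrib_right)
  finally show ?thesis .
qed

lemma sum_delta_mult:
  assumes "finite I" "i \<in> I"
  shows "(\<Sum>k\<in>I. (if i = k then 1 else 0) * x k) = (x i :: real)"
  using assms by (simp add: if_distrib[of "\<lambda>c. c * _"] cong: if_cong)

lemma is_inverse_on_mult_right:
  assumes "is_inverse_on I A M" "finite I" "i \<in> I"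
  shows "(\<Sum>j\<in>I. A i j * (\<Sum>k\<in>I. M j k * b k)) = b i"
proof -
  have "(\<Sum>j\<in>I. A i j * (\<Sum>k\<in>I. M j k * b k)) = (\<Sum>k\<in>I. (if i = k then 1 else 0) * b k)"
    using assms unfolding sum_mult_sum_assoc[OF assms(2) assms(2)] is_inverse_on_def
    by (intro sum.cong) auto
  then show ?thesis using sum_delta_mult[OF assms(2,3)] by simp
qed

lemma is_inverse_on_mult_left:
  assumes "is_inverse_on I A M" "finite I" "i \<in> I"
  shows "(\<Sum>j\<in>I. M i j * (\<Sum>k\<in>I. A j k * x k)) = x i"
proof -
  have "(\<Sum>j\<in>I. M i j * (\<Sum>k\<in>I. A j k * x k)) = (\<Sum>k\<in>I. (if i = k then 1 else 0) * x k)"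
    using assms unfolding sum_mult_sum_assoc[OF assms(2) assms(2)] is_inverse_on_def
    by (intro sum.cong) auto
  then show ?thesis using sum_delta_mult[OF assms(2,3)] by simp
qed

definition block_sum :: "('r \<Rightarrow> 'c \<Rightarrow> real) \<Rightarrow> 'r set \<Rightarrow> 'c set \<Rightarrow> real" where
  "block_sum X S T = (\<Sum>i\<in>S. \<Sum>j\<in>T. X i j)"

lemma equitable_row_sum:
  assumes "equitable P Q X" "S \<in> P" "T \<in> Q" "i \<in> S" "finite S"
  shows "(\<Sum>j\<in>T. X i j) = block_sum X S T / card S"
proof -
  have "\<forall>i'\<in>S. (\<Sum>j\<in>T. X i' j) = (\<Sum>j\<in>T. X i j)"
    using assms(1-4) unfolding equitable_def by blast
  then have "block_sum X S T = card S * (\<Sum>j\<in>T. X i j)"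
    unfolding block_sum_def by simp
  moreover have "card S > 0" using assms(4,5) card_gt_0_iff by blast
  ultimately show ?thesis by simp
qed

lemma equitable_col_sum:
  assumes "equitable P Q X" "S \<in> P" "T \<in> Q" "j \<in> T" "finite T"
  shows "(\<Sum>i\<in>S. X i j) = block_sum X S T / card T"
proof -
  have "\<forall>j'\<in>T. (\<Sum>i\<in>S. X i j') = (\<Sum>i\<in>S. X i j)"
    using assms(1-4) unfolding equitable_def by blast
  then have "block_sum X S T = card T * (\<Sum>i\<in>S. X i j)"
    unfolding block_sum_def by (subst sum.swap) simp
  moreover have "card T > 0" using assms(4,5) card_gt_0_iff by blast
  ultimately show ?thesis by simp
qed

text \<open>These are (X')^T W' X' and (X')^T W' y', rewritten with X'_ST = block_sum X S T / |S|
and W' = diag |S|.\<close>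

definition reduced_gram :: "'r set set \<Rightarrow> ('r \<Rightarrow> 'c \<Rightarrow> real) \<Rightarrow> 'c set \<Rightarrow> 'c set \<Rightarrow> real" where
  "reduced_gram P X T T' = (\<Sum>S\<in>P. block_sum X S T * block_sum X S T' / card S)"

definition reduced_moment :: "'r set set \<Rightarrow> ('r \<Rightarrow> 'c \<Rightarrow> real) \<Rightarrow> ('r \<Rightarrow> real) \<Rightarrow> 'c set \<Rightarrow> real" where
  "reduced_moment P X y T = (\<Sum>S\<in>P. block_sum X S T * sum y S / card S)"

lemma quotient_normal_equations:
  fixes X :: "'n::finite \<Rightarrow> 'd::finite \<Rightarrow> real"
  assumes P_part: "is_partition P UNIV"
    and X'_def: "X' = (\<lambda>S T. \<Sum>i\<in>UNIV. \<Sum>j\<in>UNIV. Pi_scaled P S i * X i j * Pi_mat Q j T)"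
    and y'_def: "y' = (\<lambda>S. \<Sum>i\<in>UNIV. Pi_scaled P S i * y i)"
    and W'_def: "W' = (\<lambda>S S'. \<Sum>i\<in>UNIV. Pi_mat P i S * Pi_mat P i S')"
  shows "(\<Sum>S\<in>P. \<Sum>S'\<in>P. X' S T * W' S S' * X' S' T') = reduced_gram P X T T'"
    and "(\<Sum>S\<in>P. \<Sum>S'\<in>P. X' S T * W' S S' * y' S') = reduced_moment P X y T"
proof -
  have finite_P: "finite P" using is_partition_finite[OF P_part] by simp
  have X': "X' S T = block_sum X S T / card S" for S T
  proof -
    have "X' S T = (\<Sum>i\<in>UNIV. Pi_scaled P S i * (\<Sum>j\<in>UNIV. X i j * Pi_mat Q j T))"
      unfolding X'_def by (simp add: sum_distrib_left mult.assoc)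
    also have "\<dots> = (\<Sum>i\<in>UNIV. Pi_scaled P S i * (\<Sum>j\<in>T. X i j))"
      by (simp only: sum_mult_Pi_mat)
    finally show ?thesis unfolding block_sum_def by (simp only: sum_Pi_scaled_mult)
  qed
  have y': "y' S = sum y S / card S" for S
    unfolding y'_def by (rule sum_Pi_scaled_mult)
  have weight: "(\<Sum>S'\<in>P. f S * W' S S' * g S') = card S * f S * g S"
    if "S \<in> P" for S and f g :: "'n set \<Rightarrow> real"
  proof -
    have "(\<Sum>S'\<in>P. f S * W' S S' * g S') = (\<Sum>S'\<in>P. if S' = S then card S * f S * g S else 0)"
      using that unfolding W'_def by (intro sum.cong) (auto simp: sum_Pi_mat_mult_Pi_mat[OF P_part])
    then show ?thesis using that finite_P by simp
  qed
  have card_pos: "S \<in> P \<Longrightarrow> card S > 0" for S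
    using P_part unfolding is_partition_def by (auto simp: card_gt_0_iff)
  show "(\<Sum>S\<in>P. \<Sum>S'\<in>P. X' S T * W' S S' * X' S' T') = reduced_gram P X T T'"
    unfolding reduced_gram_def
  proof (rule sum.cong)
    fix S assume "S \<in> P"
    with weight[of S "\<lambda>S. X' S T" "\<lambda>S. X' S T'"] card_pos[of S]
    show "(\<Sum>S'\<in>P. X' S T * W' S S' * X' S' T') = block_sum X S T * block_sum X S T' / card S"
      by (simp add: X')
  qed simp
  show "(\<Sum>S\<in>P. \<Sum>S'\<in>P. X' S T * W' S S' * y' S') = reduced_moment P X y T"
    unfolding reduced_moment_def
  proof (rule sum.cong)
    fix S assume "S \<in> P"
    with weight[of S "\<lambda>S. X' S T" y'] card_pos[of S]
    show "(\<Sum>S'\<in>P. X' S T * W' S S' * y' S') = block_sum X S T * sum y S / card S"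
      by (simp add: X' y')
  qed simp
qed

lemma X_mult_Pi_mult:
  fixes X :: "'n::finite \<Rightarrow> 'd::finite \<Rightarrow> real"
  assumes "is_partition Q UNIV" "equitable P Q X" "S \<in> P" "i \<in> S"
  shows "(\<Sum>l\<in>UNIV. X i l * Pi_mult Q w l) = (\<Sum>T\<in>Q. block_sum X S T / card S * w T)"
proof -
  have "(\<Sum>l\<in>UNIV. X i l * Pi_mult Q w l) = (\<Sum>T\<in>Q. \<Sum>l\<in>T. X i l * Pi_mult Q w l)"
    using assms(1) by (simp add: sum_partition)
  also have "\<dots> = (\<Sum>T\<in>Q. (\<Sum>l\<in>T. X i l) * w T)"
    using Pi_mult_class[OF assms(1)] by (simp add: sum_distrib_right)
  also have "\<dots> = (\<Sum>T\<in>Q. block_sum X S T / card S * w T)"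
    using equitable_row_sum[OF assms(2,3) _ assms(4)] by simp
  finally show ?thesis .
qed

lemma gram_mult_Pi_mult:
  fixes X :: "'n::finite \<Rightarrow> 'd::finite \<Rightarrow> real"
  assumes P_part: "is_partition P UNIV" and Q_part: "is_partition Q UNIV"
    and equit: "equitable P Q X" and "T \<in> Q" "k \<in> T"
  shows "(\<Sum>l\<in>UNIV. (\<Sum>i\<in>UNIV. X i k * X i l) * Pi_mult Q w l) =
         (\<Sum>T'\<in>Q. reduced_gram P X T T' * w T') / card T"
proof -
  define v where "v S = (\<Sum>T'\<in>Q. block_sum X S T' / card S * w T')" for S
  have "(\<Sum>l\<in>UNIV. (\<Sum>i\<in>UNIV. X i k * X i l) * Pi_mult Q w l) =
        (\<Sum>i\<in>UNIV. X i k * (\<Sum>l\<in>UNIV. X i l * Pi_mult Q w l))"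
    by (simp add: sum_mult_sum_assoc)
  also have "\<dots> = (\<Sum>S\<in>P. \<Sum>i\<in>S. X i k * v S)"
    using P_part X_mult_Pi_mult[OF Q_part equit] by (simp add: sum_partition v_def)
  also have "\<dots> = (\<Sum>S\<in>P. block_sum X S T / card T * v S)"
    using equitable_col_sum[OF equit _ assms(4,5)] by (simp add: sum_distrib_right[symmetric])
  also have "\<dots> = (\<Sum>S\<in>P. \<Sum>T'\<in>Q. block_sum X S T * block_sum X S T' / card S * w T') / card T"
    unfolding v_def sum_divide_distrib sum_distrib_left by (intro sum.cong refl) (simp add: ac_simps)
  also have "\<dots> = (\<Sum>T'\<in>Q. reduced_gram P X T T' * w T') / card T"
    unfolding reduced_gram_def by (subst sum.swap) (simp add: sum_distrib_right)
  finally show ?thesis .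
qed

lemma Xt_mult_eq_reduced_moment:
  fixes X :: "'n::finite \<Rightarrow> 'd::finite \<Rightarrow> real"
  assumes P_part: "is_partition P UNIV" and equit: "equitable P Q X" and "T \<in> Q" "k \<in> T"
    and Xty_const: "\<forall>j\<in>T. (\<Sum>i\<in>UNIV. X i j * y i) = (\<Sum>i\<in>UNIV. X i k * y i)"
  shows "(\<Sum>i\<in>UNIV. X i k * y i) = reduced_moment P X y T / card T"
proof -
  have "(\<Sum>j\<in>T. \<Sum>i\<in>UNIV. X i j * y i) = (\<Sum>j\<in>T. \<Sum>i\<in>UNIV. X i k * y i)"
    by (rule sum.cong[OF refl]) (use Xty_const in blast)
  then have "card T * (\<Sum>i\<in>UNIV. X i k * y i) = (\<Sum>j\<in>T. \<Sum>i\<in>UNIV. X i j * y i)"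
    by simp
  also have "\<dots> = (\<Sum>i\<in>UNIV. (\<Sum>j\<in>T. X i j) * y i)"
    by (subst sum.swap) (simp add: sum_distrib_right)
  also have "\<dots> = (\<Sum>S\<in>P. \<Sum>i\<in>S. (\<Sum>j\<in>T. X i j) * y i)"
    by (rule sum_partition[OF P_part finite_UNIV])
  also have "\<dots> = (\<Sum>S\<in>P. \<Sum>i\<in>S. block_sum X S T / card S * y i)"
    using equitable_row_sum[OF equit _ assms(3)] by (intro sum.cong refl) simp
  also have "\<dots> = reduced_moment P X y T"
    unfolding reduced_moment_def by (simp add: sum_distrib_left sum_divide_distrib)
  finally have "card T * (\<Sum>i\<in>UNIV. X i k * y i) = reduced_moment P X y T" .
  moreover have "card T > 0" using assms(4) by (auto simp: card_gt_0_iff)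
  ultimately show ?thesis by (metis nonzero_mult_div_cancel_left of_nat_0_less_iff less_irrefl)
qed

theorem mainTheorem7:
  fixes X :: "'n::finite \<Rightarrow> 'd::finite \<Rightarrow> real"
    and y :: "'n \<Rightarrow> real"
    and P :: "'n set set" and Q :: "'d set set"
    and X' :: "'n set \<Rightarrow> 'd set \<Rightarrow> real"
    and y' :: "'n set \<Rightarrow> real"
    and W' :: "'n set \<Rightarrow> 'n set \<Rightarrow> real"
    and w' :: "'d set \<Rightarrow> real"
  assumes XtX_inv: "invertible_on UNIV (\<lambda>j k. \<Sum>i\<in>UNIV. X i j * X i k)"
    and P_part: "is_partition P UNIV"
    and Q_part: "is_partition Q UNIV"
    and equit: "equitable P Q X"
    and Xty_const: "\<forall>T\<in>Q. \<forall>j1\<in>T. \<forall>j2\<in>T.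
                     (\<Sum>i\<in>UNIV. X i j1 * y i) = (\<Sum>i\<in>UNIV. X i j2 * y i)"
    and X'_def: "X' = (\<lambda>S T. \<Sum>i\<in>UNIV. \<Sum>j\<in>UNIV. Pi_scaled P S i * X i j * Pi_mat Q j T)"
    and y'_def: "y' = (\<lambda>S. \<Sum>i\<in>UNIV. Pi_scaled P S i * y i)"
    and W'_def: "W' = (\<lambda>S S'. \<Sum>i\<in>UNIV. Pi_mat P i S * Pi_mat P i S')"
    and A'_inv: "invertible_on Q (\<lambda>T T'. \<Sum>S\<in>P. \<Sum>S'\<in>P. X' S T * W' S S' * X' S' T')"
    and w'_def: "w' = (\<lambda>T. \<Sum>T'\<in>Q.
                   inv_on Q (\<lambda>T T'. \<Sum>S\<in>P. \<Sum>S'\<in>P. X' S T * W' S S' * X' S' T') T T' *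
                   (\<Sum>S\<in>P. \<Sum>S'\<in>P. X' S T' * W' S S' * y' S'))"
  shows "\<forall>j. (\<Sum>T\<in>Q. Pi_mat Q j T * w' T) =
             (\<Sum>k\<in>UNIV. inv_on UNIV (\<lambda>j k. \<Sum>i\<in>UNIV. X i j * X i k) j k *
                         (\<Sum>i\<in>UNIV. X i k * y i))"
proof -
  let ?G = "\<lambda>j k. \<Sum>i\<in>UNIV. X i j * X i k"
  note reduced = quotient_normal_equations[OF P_part X'_def y'_def W'_def]
  have reduced_inverse: "is_inverse_on Q (reduced_gram P X) (inv_on Q (reduced_gram P X))"
    using is_inverse_on_inv_on[OF A'_inv] by (simp only: reduced)
  have reduced_solution: "(\<Sum>T'\<in>Q. reduced_gram P X T T' * w' T') = reduced_moment P X y T"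
    if "T \<in> Q" for T
    unfolding w'_def reduced
    by (rule is_inverse_on_mult_right[OF reduced_inverse is_partition_finite[OF Q_part] that]) simp
  have normal_equation: "(\<Sum>l\<in>UNIV. ?G k l * Pi_mult Q w' l) = (\<Sum>i\<in>UNIV. X i k * y i)" for k
  proof -
    obtain T where T: "T \<in> Q" "k \<in> T" using is_partition_obtain_class[OF Q_part UNIV_I] by blast
    have "\<forall>j\<in>T. (\<Sum>i\<in>UNIV. X i j * y i) = (\<Sum>i\<in>UNIV. X i k * y i)"
      using Xty_const T by blast
    from Xt_mult_eq_reduced_moment[OF P_part equit T this]
    show ?thesis
      using gram_mult_Pi_mult[OF P_part Q_part equit T] reduced_solution[OF T(1)] by simp
  qed
  show ?thesis
  proof
    fix j
    have "Pi_mult Q w' j = (\<Sum>k\<in>UNIV. inv_on UNIV ?G j k * (\<Sum>l\<in>UNIV. ?G k l * Pi_mult Q w' l))"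
      using is_inverse_on_mult_left[OF is_inverse_on_inv_on[OF XtX_inv] finite_UNIV UNIV_I] by simp
    also have "\<dots> = (\<Sum>k\<in>UNIV. inv_on UNIV ?G j k * (\<Sum>i\<in>UNIV. X i k * y i))"
      by (simp only: normal_equation)
    finally show "(\<Sum>T\<in>Q. Pi_mat Q j T * w' T) =
        (\<Sum>k\<in>UNIV. inv_on UNIV ?G j k * (\<Sum>i\<in>UNIV. X i k * y i))"
      unfolding Pi_mult_def .
  qed
qed

end
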